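(* For every $k\ge1$, the friendship graph $K_1\vee kK_2$ is determined by its $A_\alpha$-spectrum for every $\alpha\in(1/2,1)$.
   Context: All graphs are finite, simple and undirected. $A_\alpha(G)=\alpha D(G)+(1-\alpha)A(G)$ with $A(G)$ the adjacency and $D(G)$ the degree matrix. A graph is determined by its $A_\alpha$-spectrum if every graph whose $A_\alpha$ matrix has the same multiset of eigenvalues is isomorphic to it. $kK_2$ is the disjoint union of $k$ edges and $\vee$ is the join (disjoint union plus all edges between the two vertex sets); $K_1\vee kK_2$ is the friendship graph. *)

theory Defs
  imports "Jordan_Normal_Form.Char_Poly"
begin

definition simple_graph :: "nat \<Rightarrow> (nat \<Rightarrow> nat \<Rightarrow> bool) \<Rightarrow> bool" where
  "simple_graph n E \<longleftrightarrow> (\<forall>i j. E i j \<longrightarrow> i < n \<and> j < n \<and> i \<noteq> j \<and> E j i)"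

definition degree :: "nat \<Rightarrow> (nat \<Rightarrow> nat \<Rightarrow> bool) \<Rightarrow> nat \<Rightarrow> nat" where
  "degree n E i = card {j. j < n \<and> E i j}"

definition adj_matrix :: "nat \<Rightarrow> (nat \<Rightarrow> nat \<Rightarrow> bool) \<Rightarrow> real mat" where
  "adj_matrix n E = mat n n (\<lambda>(i, j). if E i j then 1 else 0)"

definition deg_matrix :: "nat \<Rightarrow> (nat \<Rightarrow> nat \<Rightarrow> bool) \<Rightarrow> real mat" where
  "deg_matrix n E = mat n n (\<lambda>(i, j). if i = j then real (degree n E i) else 0)"

definition A_alpha :: "real \<Rightarrow> nat \<Rightarrow> (nat \<Rightarrow> nat \<Rightarrow> bool) \<Rightarrow> real mat" where
  "A_alpha \<alpha> n E = \<alpha> \<cdot>\<^sub>m deg_matrix n E + (1 - \<alpha>) \<cdot>\<^sub>m adj_matrix n E"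

definition A_alpha_spectrum :: "real \<Rightarrow> nat \<Rightarrow> (nat \<Rightarrow> nat \<Rightarrow> bool) \<Rightarrow> complex multiset" where
  "A_alpha_spectrum \<alpha> n E = proots (char_poly (map_mat complex_of_real (A_alpha \<alpha> n E)))"

definition graph_iso :: "nat \<Rightarrow> (nat \<Rightarrow> nat \<Rightarrow> bool) \<Rightarrow> nat \<Rightarrow> (nat \<Rightarrow> nat \<Rightarrow> bool) \<Rightarrow> bool" where
  "graph_iso n E m F \<longleftrightarrow> (\<exists>f. bij_betw f {0..<n} {0..<m} \<and>
      (\<forall>i<n. \<forall>j<n. E i j \<longleftrightarrow> F (f i) (f j)))"

definition determined_by_A_alpha_spectrum :: "real \<Rightarrow> nat \<Rightarrow> (nat \<Rightarrow> nat \<Rightarrow> bool) \<Rightarrow> bool" where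
  "determined_by_A_alpha_spectrum \<alpha> n E \<longleftrightarrow>
     (\<forall>m F. simple_graph m F \<and> A_alpha_spectrum \<alpha> m F = A_alpha_spectrum \<alpha> n E
        \<longrightarrow> graph_iso m F n E)"

text \<open>Friendship graph K_1 join kK_2 on {0..<2k+1}: vertex 0 is the centre,
  the edges of kK_2 are {2a+1, 2a+2} for a < k.\<close>
definition friendship :: "nat \<Rightarrow> nat \<Rightarrow> nat \<Rightarrow> bool" where
  "friendship k i j \<longleftrightarrow> i < 2*k+1 \<and> j < 2*k+1 \<and> i \<noteq> j \<and>
     (i = 0 \<or> j = 0 \<or> (i - 1) div 2 = (j - 1) div 2)"

end

theory Submission
  imports Defs "Jordan_Normal_Form.Schur_Decomposition"
begin

text \<open>Since \<open>tr A\<^sub>\<alpha>(G)\<^sup>k\<close> is the \<open>k\<close>-th power sum of the \<open>A\<^sub>\<alpha>\<close>-eigenvalues, a graph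
  cospectral with the friendship graph has \<open>2k+1\<close> vertices and the same values of \<open>\<Sum>d\<close>,
  \<open>\<Sum>d\<^sup>2\<close> and \<open>\<alpha>\<^sup>3\<Sum>d\<^sup>3 + (1-\<alpha>)\<^sup>3T\<close>, where \<open>T\<close> counts closed walks of length three.
  The first two moments give \<open>\<Sum>(d-2)\<^sup>2 = (2k-2)\<^sup>2\<close>, so a vertex of degree \<open>2k\<close> forces all
  other degrees to be 2, and such a graph is a friendship graph.  If instead every degree is at
  most \<open>2k-1\<close>, then \<open>\<Sum>d\<^sup>3\<close> falls short of its friendship value by some \<open>D > 0\<close>, while a
  vertexwise count of triangles shows that \<open>T\<close> exceeds its friendship value by at most \<open>D\<close>.
  As \<open>\<alpha> > 1/2\<close> means \<open>\<alpha>\<^sup>3 > (1-\<alpha>)\<^sup>3\<close>, the third moments cannot agree.\<close>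

section \<open>Power sums of the spectrum\<close>

(* Entries of products are expanded as index sums by index_mult_mat_sum rather than as
   scalar products of rows and columns. *)
declare index_mult_mat(1) [simp del]

definition trace :: "'a::comm_ring_1 mat \<Rightarrow> 'a" where
  "trace A = (\<Sum>i<dim_row A. A $$ (i, i))"

lemma index_mult_mat_sum:
  assumes "A \<in> carrier_mat n m" "B \<in> carrier_mat m p" "i < n" "j < p"
  shows "(A * B) $$ (i, j) = (\<Sum>l<m. A $$ (i, l) * B $$ (l, j))"
  using assms by (auto simp: index_mult_mat scalar_prod_def intro!: sum.reindex_bij_witness[of _ id id])

lemma trace_mult_comm:
  assumes A: "A \<in> carrier_mat n m" and B: "B \<in> carrier_mat m n"
  shows "trace (A * B) = trace (B * A)"
proof -
  have "trace (A * B) = (\<Sum>i<n. \<Sum>j<m. A $$ (i, j) * B $$ (j, i))"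
    using A B by (auto simp: trace_def index_mult_mat_sum carrier_matD intro!: sum.cong)
  also have "\<dots> = (\<Sum>j<m. \<Sum>i<n. B $$ (j, i) * A $$ (i, j))"
    by (subst sum.swap) (simp add: mult.commute)
  also have "\<dots> = trace (B * A)"
    using A B by (auto simp: trace_def index_mult_mat_sum carrier_matD intro!: sum.cong)
  finally show ?thesis .
qed

lemma upper_triangular_mult_mat:
  fixes A B :: "'a::comm_ring_1 mat"
  assumes A: "A \<in> carrier_mat n n" and B: "B \<in> carrier_mat n n"
    and "upper_triangular A" "upper_triangular B"
  shows "upper_triangular (A * B)"
    and "i < n \<Longrightarrow> (A * B) $$ (i, i) = A $$ (i, i) * B $$ (i, i)"
proof -
  have zero: "A $$ (i, l) * B $$ (l, j) = 0" if "j < i" "i < n" "l < n" for i j l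
    using upper_triangularD[OF assms(3), of l i] upper_triangularD[OF assms(4), of j l] A B that
    by (cases "l < i") auto
  show "upper_triangular (A * B)"
    using A B by (intro upper_triangularI) (simp add: index_mult_mat_sum zero carrier_matD)
  assume i: "i < n"
  have "(A * B) $$ (i, i) = (\<Sum>l<n. A $$ (i, l) * B $$ (l, i))"
    using A B i by (simp add: index_mult_mat_sum)
  also have "\<dots> = (\<Sum>l<n. if l = i then A $$ (i, i) * B $$ (i, i) else 0)"
    using upper_triangularD[OF assms(3), of _ i] upper_triangularD[OF assms(4), of i] A B i
    by (intro sum.cong) (auto simp: neq_iff)
  finally show "(A * B) $$ (i, i) = A $$ (i, i) * B $$ (i, i)"
    using i by simp
qed

lemma upper_triangular_pow_mat:
  fixes B :: "'a::comm_ring_1 mat"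
  assumes B: "B \<in> carrier_mat n n" and ut: "upper_triangular B"
  shows "upper_triangular (B ^\<^sub>m k) \<and> (\<forall>i<n. (B ^\<^sub>m k) $$ (i, i) = B $$ (i, i) ^ k)"
proof (induction k)
  case 0
  then show ?case using B by auto
next
  case (Suc k)
  then have "(B ^\<^sub>m k * B) $$ (i, i) = B $$ (i, i) ^ Suc k" if "i < n" for i
    using upper_triangular_mult_mat(2)[OF pow_carrier_mat[OF B] B _ ut that] that
    by (simp add: mult.commute)
  with Suc show ?case
    using upper_triangular_mult_mat(1)[OF pow_carrier_mat[OF B] B _ ut] by simp
qed

lemma proots_linear_factors:
  "proots (\<Prod>a\<leftarrow>as. [:- a, 1:]) = mset (as :: 'a::idom list)"
proof (induction as)
  case (Cons a as)
  have "(\<Prod>a\<leftarrow>as. [:- a, 1:]) \<noteq> 0"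
    by (auto simp: prod_list_zero_iff)
  then have "proots ([:- a, 1:] * (\<Prod>a\<leftarrow>as. [:- a, 1:])) = proots [:- a, 1:] + mset as"
    using Cons.IH by (subst proots_mult) simp_all
  also have "proots [:- a, 1:] = {#a#}"
    using proots_linear_factor[of "- a"] by simp
  finally show ?case
    by simp
qed simp

lemma char_poly_eigenvalue_power_sums:
  fixes A :: "complex mat"
  assumes A: "A \<in> carrier_mat n n"
  shows "size (proots (char_poly A)) = n"
    and "trace (A ^\<^sub>m k) = (\<Sum>x\<in>#proots (char_poly A). x ^ k)"
proof -
  obtain as where cp: "char_poly A = (\<Prod>a\<leftarrow>as. [:- a, 1:])" and len: "length as = n"
    using char_poly_factorized[OF A] by blast
  then show "size (proots (char_poly A)) = n"
    by (simp add: proots_linear_factors)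
  obtain B P Q where "schur_decomposition A as = (B, P, Q)"
    by (cases "schur_decomposition A as")
  from schur_decomposition[OF A cp this] have wit: "similar_mat_wit A B P Q"
    and ut: "upper_triangular B" and diag: "diag_mat B = as" by auto
  from wit A have B: "B \<in> carrier_mat n n" and P: "P \<in> carrier_mat n n"
    and Q: "Q \<in> carrier_mat n n" and QP: "Q * P = 1\<^sub>m n"
    unfolding similar_mat_wit_def Let_def by auto
  have "trace (A ^\<^sub>m k) = trace (P * (B ^\<^sub>m k * Q))"
    using similar_mat_wit_pow_id[OF wit, of k] P B Q by (simp add: assoc_mult_mat[of _ n n _ n _ n])
  also have "\<dots> = trace (B ^\<^sub>m k * Q * P)"
    using trace_mult_comm[OF P mult_carrier_mat[OF pow_carrier_mat[OF B] Q]] B P Q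
    by (simp add: assoc_mult_mat[of _ n n _ n _ n])
  also have "B ^\<^sub>m k * Q * P = B ^\<^sub>m k"
    using B Q P QP by (simp add: assoc_mult_mat[of _ n n _ n _ n])
  also have "trace (B ^\<^sub>m k) = (\<Sum>i<n. (as ! i) ^ k)"
    using upper_triangular_pow_mat[OF B ut, of k] B diag
    by (auto simp: trace_def diag_mat_def intro!: sum.cong)
  also have "\<dots> = (\<Sum>x\<leftarrow>as. x ^ k)"
    using len by (simp add: sum_list_sum_nth atLeast0LessThan)
  also have "\<dots> = (\<Sum>x\<in>#proots (char_poly A). x ^ k)"
    unfolding cp proots_linear_factors by (induction as) auto
  finally show "trace (A ^\<^sub>m k) = (\<Sum>x\<in>#proots (char_poly A). x ^ k)" .
qed

lemma A_alpha_carrier [simp]: "A_alpha \<alpha> n E \<in> carrier_mat n n"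
  by (simp add: A_alpha_def deg_matrix_def adj_matrix_def)

lemma dim_A_alpha [simp]: "dim_row (A_alpha \<alpha> n E) = n" "dim_col (A_alpha \<alpha> n E) = n"
  using A_alpha_carrier by blast+

lemma trace_of_real_A_alpha_pow:
  "complex_of_real (trace (A_alpha \<alpha> n E ^\<^sub>m k)) = (\<Sum>x\<in>#A_alpha_spectrum \<alpha> n E. x ^ k)"
proof -
  have "complex_of_real (trace (A_alpha \<alpha> n E ^\<^sub>m k))
      = trace (map_mat complex_of_real (A_alpha \<alpha> n E ^\<^sub>m k))"
    by (simp add: trace_def)
  also have "\<dots> = trace (map_mat complex_of_real (A_alpha \<alpha> n E) ^\<^sub>m k)"
    by (simp add: of_real_hom.mat_hom_pow[OF A_alpha_carrier])
  finally show ?thesis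
    by (simp add: A_alpha_spectrum_def char_poly_eigenvalue_power_sums(2)[of _ n])
qed

lemma A_alpha_cospectral:
  assumes "A_alpha_spectrum \<alpha> m F = A_alpha_spectrum \<alpha> n E"
  shows "m = n" and "trace (A_alpha \<alpha> m F ^\<^sub>m k) = trace (A_alpha \<alpha> n E ^\<^sub>m k)"
proof -
  show "m = n"
    using assms char_poly_eigenvalue_power_sums(1)[of "map_mat complex_of_real (A_alpha \<alpha> _ _)"]
    by (metis A_alpha_carrier A_alpha_spectrum_def map_carrier_mat)
  show "trace (A_alpha \<alpha> m F ^\<^sub>m k) = trace (A_alpha \<alpha> n E ^\<^sub>m k)"
    using trace_of_real_A_alpha_pow[of \<alpha> m F k] trace_of_real_A_alpha_pow[of \<alpha> n E k] assms
    by (metis of_real_eq_iff)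
qed

section \<open>Traces of powers of \<open>A\<^sub>\<alpha>\<close>\<close>

definition neighbours :: "nat \<Rightarrow> (nat \<Rightarrow> nat \<Rightarrow> bool) \<Rightarrow> nat \<Rightarrow> nat set" where
  "neighbours n E i = {j. j < n \<and> E i j}"

(* Summed over i, this counts every triangle six times. *)
definition triangle_walks :: "nat \<Rightarrow> (nat \<Rightarrow> nat \<Rightarrow> bool) \<Rightarrow> nat \<Rightarrow> (nat \<times> nat) set" where
  "triangle_walks n E i = {(j, l). j < n \<and> l < n \<and> E i j \<and> E j l \<and> E l i}"

lemma finite_neighbours [simp]: "finite (neighbours n E i)"
  by (simp add: neighbours_def)

lemma degree_eq_card_neighbours: "degree n E i = card (neighbours n E i)"
  by (simp add: degree_def neighbours_def)

lemma lessThan_Int_adj [simp]: "{..<n} \<inter> Collect (E i) = neighbours n E i"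
  by (auto simp: neighbours_def)

lemma A_alpha_index:
  assumes "i < n" "j < n"
  shows "A_alpha \<alpha> n E $$ (i, j)
    = (if i = j then \<alpha> * real (degree n E i) else 0) + (1 - \<alpha>) * of_bool (E i j)"
  using assms by (simp add: A_alpha_def deg_matrix_def adj_matrix_def)

lemma A_alpha_row_sum:
  assumes "i < n"
  shows "(\<Sum>j<n. A_alpha \<alpha> n E $$ (i, j) * h j)
    = \<alpha> * real (degree n E i) * h i + (1 - \<alpha>) * (\<Sum>j\<in>neighbours n E i. h j)"
proof -
  have "A_alpha \<alpha> n E $$ (i, j) * h j
      = (if j = i then \<alpha> * real (degree n E i) * h i else 0) + of_bool (E i j) * ((1 - \<alpha>) * h j)"
    if "j < n" for j
    using assms that by (simp add: A_alpha_index distrib_right)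
  then show ?thesis
    using assms by (simp add: sum.distrib sum_distrib_left)
qed

context
  fixes n E assumes G: "simple_graph n E"
begin

lemma adj_irrefl: "\<not> E i i"
  using G by (auto simp: simple_graph_def)

lemma adj_sym: "E i j \<longleftrightarrow> E j i"
  using G by (auto simp: simple_graph_def)

lemma adj_less: "E i j \<Longrightarrow> i < n" "E i j \<Longrightarrow> j < n"
  using G by (auto simp: simple_graph_def)

lemma A_alpha_sym: "i < n \<Longrightarrow> j < n \<Longrightarrow> A_alpha \<alpha> n E $$ (i, j) = A_alpha \<alpha> n E $$ (j, i)"
  by (auto simp: A_alpha_index adj_sym)

lemma sum_sum_neighbours: "(\<Sum>i<n. \<Sum>j\<in>neighbours n E i. f j) = (\<Sum>j<n. real (degree n E j) * f j)"
proof -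
  have "(\<Sum>i<n. \<Sum>j\<in>neighbours n E i. f j) = (\<Sum>i<n. \<Sum>j\<in>{j\<in>{..<n}. E i j}. f j)"
    by (simp add: neighbours_def conj_commute)
  also have "\<dots> = (\<Sum>j<n. \<Sum>i\<in>{i\<in>{..<n}. E i j}. f j)"
    by (rule sum.swap_restrict) auto
  also have "\<dots> = (\<Sum>j<n. real (degree n E j) * f j)"
    by (simp add: degree_eq_card_neighbours neighbours_def adj_sym conj_commute)
  finally show ?thesis .
qed

lemma card_triangle_walks:
  "card (triangle_walks n E i) = (\<Sum>j\<in>neighbours n E i. card (neighbours n E j \<inter> neighbours n E i))"
proof -
  have "triangle_walks n E i = Sigma (neighbours n E i) (\<lambda>j. neighbours n E j \<inter> neighbours n E i)"
    by (auto simp: triangle_walks_def neighbours_def adj_sym[of _ i])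
  then show ?thesis
    by (simp add: card_SigmaI)
qed

lemma A_alpha_sq_index:
  assumes i: "i < n" and j: "j < n"
  shows "(A_alpha \<alpha> n E * A_alpha \<alpha> n E) $$ (i, j)
    = (if i = j then \<alpha>^2 * real (degree n E i) ^ 2 else 0)
      + \<alpha> * (1 - \<alpha>) * (real (degree n E i) + real (degree n E j)) * of_bool (E i j)
      + (1 - \<alpha>)^2 * real (card (neighbours n E i \<inter> neighbours n E j))"
proof -
  let ?A = "A_alpha \<alpha> n E"
  have "(?A * ?A) $$ (i, j) = (\<Sum>l<n. ?A $$ (i, l) * ?A $$ (l, j))"
    using i j by (simp add: index_mult_mat_sum[OF A_alpha_carrier A_alpha_carrier])
  also have "\<dots> = \<alpha> * real (degree n E i) * ?A $$ (i, j) + (1 - \<alpha>) * (\<Sum>l\<in>neighbours n E i. ?A $$ (j, l))"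
    using i j by (simp add: A_alpha_row_sum A_alpha_sym[of _ j] neighbours_def)
  also have "(\<Sum>l\<in>neighbours n E i. ?A $$ (j, l)) = (\<Sum>l<n. ?A $$ (j, l) * of_bool (E i l))"
    by (simp add: neighbours_def)
  also have "\<dots> = \<alpha> * real (degree n E j) * of_bool (E i j)
      + (1 - \<alpha>) * (\<Sum>l\<in>neighbours n E j. of_bool (E i l))"
    using j by (rule A_alpha_row_sum)
  finally have "(?A * ?A) $$ (i, j) = \<alpha> * real (degree n E i) * ?A $$ (i, j)
      + (1 - \<alpha>) * (\<alpha> * real (degree n E j) * of_bool (E i j)
      + (1 - \<alpha>) * (\<Sum>l\<in>neighbours n E j. of_bool (E i l)))" .
  moreover have "neighbours n E j \<inter> {l. E i l} = neighbours n E i \<inter> neighbours n E j"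
    by (auto simp: neighbours_def)
  ultimately show ?thesis
    using i j by (simp add: A_alpha_index adj_irrefl power2_eq_square algebra_simps)
qed

lemma A_alpha_sq_diag:
  assumes "i < n"
  shows "(A_alpha \<alpha> n E * A_alpha \<alpha> n E) $$ (i, i)
    = \<alpha>^2 * real (degree n E i) ^ 2 + (1 - \<alpha>)^2 * real (degree n E i)"
  using assms by (simp add: A_alpha_sq_index adj_irrefl degree_eq_card_neighbours)

lemma trace_A_alpha:
  "trace (A_alpha \<alpha> n E) = \<alpha> * (\<Sum>i<n. real (degree n E i))"
  by (simp add: trace_def A_alpha_index adj_irrefl sum_distrib_left)

lemma trace_A_alpha_sq:
  "trace (A_alpha \<alpha> n E ^\<^sub>m 2)
    = \<alpha>^2 * (\<Sum>i<n. real (degree n E i) ^ 2) + (1 - \<alpha>)^2 * (\<Sum>i<n. real (degree n E i))"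
proof -
  have "A_alpha \<alpha> n E ^\<^sub>m 2 = A_alpha \<alpha> n E * A_alpha \<alpha> n E"
    by (simp add: numeral_2_eq_2)
  then show ?thesis
    by (simp add: trace_def A_alpha_sq_diag sum.distrib sum_distrib_left
       )
qed

lemma trace_A_alpha_cube:
  "trace (A_alpha \<alpha> n E ^\<^sub>m 3)
    = \<alpha>^3 * (\<Sum>i<n. real (degree n E i) ^ 3)
      + 3 * \<alpha> * (1 - \<alpha>)^2 * (\<Sum>i<n. real (degree n E i) ^ 2)
      + (1 - \<alpha>)^3 * (\<Sum>i<n. real (card (triangle_walks n E i)))"
proof -
  let ?A = "A_alpha \<alpha> n E" and ?d = "\<lambda>i. real (degree n E i)"
  have A: "?A \<in> carrier_mat n n" by simp
  have "trace (?A ^\<^sub>m 3) = trace (?A * ?A * ?A)"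
    by (simp add: numeral_3_eq_3)
  also have "\<dots> = trace (?A * (?A * ?A))"
    by (rule trace_mult_comm[of _ n n]) (use A mult_carrier_mat[OF A A] in auto)
  also have "\<dots> = (\<Sum>i<n. \<alpha>^3 * ?d i ^ 3 + 2 * \<alpha> * (1 - \<alpha>)^2 * ?d i ^ 2
      + \<alpha> * (1 - \<alpha>)^2 * (\<Sum>j\<in>neighbours n E i. ?d j)
      + (1 - \<alpha>)^3 * real (card (triangle_walks n E i)))"
    unfolding trace_def
  proof (rule sum.cong)
    fix i assume "i \<in> {..<n}"
    then have i: "i < n" by simp
    have "(?A * (?A * ?A)) $$ (i, i) = (\<Sum>j<n. ?A $$ (i, j) * (?A * ?A) $$ (j, i))"
      using i by (simp add: index_mult_mat_sum[OF A mult_carrier_mat[OF A A]])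
    also have "\<dots> = \<alpha> * ?d i * (?A * ?A) $$ (i, i) + (1 - \<alpha>) * (\<Sum>j\<in>neighbours n E i. (?A * ?A) $$ (j, i))"
      using i by (rule A_alpha_row_sum)
    also have "(\<Sum>j\<in>neighbours n E i. (?A * ?A) $$ (j, i))
        = (\<Sum>j\<in>neighbours n E i. \<alpha> * (1 - \<alpha>) * (?d j + ?d i)
             + (1 - \<alpha>)^2 * real (card (neighbours n E j \<inter> neighbours n E i)))"
      using i by (intro sum.cong) (auto simp: A_alpha_sq_index neighbours_def adj_sym[of _ i] adj_irrefl)
    also have "\<dots> = \<alpha> * (1 - \<alpha>) * ((\<Sum>j\<in>neighbours n E i. ?d j) + ?d i ^ 2)
          + (1 - \<alpha>)^2 * real (card (triangle_walks n E i))"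
      by (simp add: sum.distrib card_triangle_walks degree_eq_card_neighbours power2_eq_square
          flip: sum_distrib_left)
    finally show "(?A * (?A * ?A)) $$ (i, i) = \<alpha>^3 * ?d i ^ 3 + 2 * \<alpha> * (1 - \<alpha>)^2 * ?d i ^ 2
      + \<alpha> * (1 - \<alpha>)^2 * (\<Sum>j\<in>neighbours n E i. ?d j)
      + (1 - \<alpha>)^3 * real (card (triangle_walks n E i))"
      using i by (simp add: A_alpha_sq_diag power2_eq_square power3_eq_cube algebra_simps)
  qed simp
  also have "\<dots> = \<alpha>^3 * (\<Sum>i<n. ?d i ^ 3) + 2 * \<alpha> * (1 - \<alpha>)^2 * (\<Sum>i<n. ?d i ^ 2)
      + \<alpha> * (1 - \<alpha>)^2 * (\<Sum>i<n. \<Sum>j\<in>neighbours n E i. ?d j)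
      + (1 - \<alpha>)^3 * (\<Sum>i<n. real (card (triangle_walks n E i)))"
    by (simp add: sum.distrib flip: sum_distrib_left)
  also have "(\<Sum>i<n. \<Sum>j\<in>neighbours n E i. ?d j) = (\<Sum>i<n. ?d i ^ 2)"
    by (simp add: sum_sum_neighbours power2_eq_square)
  finally show ?thesis
    by (simp add: algebra_simps)
qed

end

lemma A_alpha_cospectral_degree_moments:
  assumes F: "simple_graph m F" and E: "simple_graph n E" and "\<alpha> \<noteq> 0"
    and sp: "A_alpha_spectrum \<alpha> m F = A_alpha_spectrum \<alpha> n E"
  shows "m = n"
    and "(\<Sum>i<m. real (degree m F i)) = (\<Sum>i<n. real (degree n E i))"
    and "(\<Sum>i<m. real (degree m F i) ^ 2) = (\<Sum>i<n. real (degree n E i) ^ 2)"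
    and "\<alpha>^3 * (\<Sum>i<m. real (degree m F i) ^ 3) + (1 - \<alpha>)^3 * (\<Sum>i<m. real (card (triangle_walks m F i)))
       = \<alpha>^3 * (\<Sum>i<n. real (degree n E i) ^ 3) + (1 - \<alpha>)^3 * (\<Sum>i<n. real (card (triangle_walks n E i)))"
proof -
  note tr = A_alpha_cospectral(2)[OF sp]
  show "m = n"
    using A_alpha_cospectral(1)[OF sp] .
  show sum1: "(\<Sum>i<m. real (degree m F i)) = (\<Sum>i<n. real (degree n E i))"
    using tr[of 1] \<open>\<alpha> \<noteq> 0\<close> by (simp add: trace_A_alpha[OF F] trace_A_alpha[OF E])
  show sum2: "(\<Sum>i<m. real (degree m F i) ^ 2) = (\<Sum>i<n. real (degree n E i) ^ 2)"
    using tr[of 2] \<open>\<alpha> \<noteq> 0\<close> sum1 by (simp add: trace_A_alpha_sq[OF F] trace_A_alpha_sq[OF E])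
  show "\<alpha>^3 * (\<Sum>i<m. real (degree m F i) ^ 3) + (1 - \<alpha>)^3 * (\<Sum>i<m. real (card (triangle_walks m F i)))
       = \<alpha>^3 * (\<Sum>i<n. real (degree n E i) ^ 3) + (1 - \<alpha>)^3 * (\<Sum>i<n. real (card (triangle_walks n E i)))"
    using tr[of 3] sum2 by (simp add: trace_A_alpha_cube[OF F] trace_A_alpha_cube[OF E])
qed

section \<open>Counting triangle walks\<close>

definition arcs :: "nat \<Rightarrow> (nat \<Rightarrow> nat \<Rightarrow> bool) \<Rightarrow> (nat \<times> nat) set" where
  "arcs n E = {(j, l). j < n \<and> l < n \<and> E j l}"

lemma finite_arcs [simp]: "finite (arcs n E)"
  by (rule finite_subset[of _ "{..<n} \<times> {..<n}"]) (auto simp: arcs_def)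

lemma card_arcs: "card (arcs n E) = (\<Sum>j<n. degree n E j)"
proof -
  have "arcs n E = Sigma {..<n} (neighbours n E)"
    by (auto simp: arcs_def neighbours_def)
  then show ?thesis
    by (simp add: card_SigmaI degree_eq_card_neighbours)
qed

context
  fixes n E assumes G: "simple_graph n E"
begin

lemma neighbours_not_refl: "i \<notin> neighbours n E i"
  by (simp add: neighbours_def adj_irrefl[OF G])

lemma mem_neighbours_sym: "j \<in> neighbours n E i \<longleftrightarrow> i \<in> neighbours n E j"
  using adj_less[OF G] by (auto simp: neighbours_def adj_sym[OF G, of i])

lemma degree_le: "i < n \<Longrightarrow> degree n E i \<le> n - 1"
proof -
  assume "i < n"
  have "neighbours n E i \<subseteq> {..<n} - {i}"
    using neighbours_not_refl by (auto simp: neighbours_def)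
  then have "degree n E i \<le> card ({..<n} - {i})"
    unfolding degree_eq_card_neighbours by (rule card_mono[rotated]) simp
  with \<open>i < n\<close> show ?thesis by simp
qed

lemma card_triangle_walks_le: "card (triangle_walks n E i) \<le> degree n E i * (degree n E i - 1)"
proof -
  have "card (neighbours n E j \<inter> neighbours n E i) \<le> degree n E i - 1" if "j \<in> neighbours n E i" for j
  proof -
    have "neighbours n E j \<inter> neighbours n E i \<subseteq> neighbours n E i - {j}"
      using neighbours_not_refl by auto
    then have "card (neighbours n E j \<inter> neighbours n E i) \<le> card (neighbours n E i - {j})"
      by (intro card_mono) auto
    then show ?thesis
      using that by (simp add: degree_eq_card_neighbours)
  qed
  then show ?thesis
    using sum_bounded_above[of "neighbours n E i" _ "degree n E i - 1"]
    by (simp add: card_triangle_walks[OF G] degree_eq_card_neighbours)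
qed

lemma triangle_walks_subset_arcs: "triangle_walks n E i \<subseteq> arcs n E"
  by (auto simp: triangle_walks_def arcs_def)

lemma card_triangle_walks_add_disjoint_arcs:
  assumes "S \<subseteq> arcs n E" "S \<inter> triangle_walks n E i = {}"
  shows "card (triangle_walks n E i) + card S \<le> (\<Sum>j<n. degree n E j)"
proof -
  have "card (triangle_walks n E i) + card S = card (triangle_walks n E i \<union> S)"
    using assms triangle_walks_subset_arcs[of i]
    by (intro card_Un_disjoint[symmetric] finite_subset[OF _ finite_arcs]) auto
  also have "\<dots> \<le> card (arcs n E)"
    using assms triangle_walks_subset_arcs by (intro card_mono[OF finite_arcs]) auto
  finally show ?thesis
    by (simp add: card_arcs)
qed

definition star_arcs :: "nat \<Rightarrow> (nat \<times> nat) set" where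
  "star_arcs i = {i} \<times> neighbours n E i \<union> neighbours n E i \<times> {i}"

lemma star_arcs:
  shows "star_arcs i \<subseteq> arcs n E" and "star_arcs i \<inter> triangle_walks n E i = {}"
    and "card (star_arcs i) = 2 * degree n E i"
proof -
  show "star_arcs i \<subseteq> arcs n E"
    by (auto simp: star_arcs_def arcs_def neighbours_def adj_sym[OF G, of i] adj_less[OF G])
  show "star_arcs i \<inter> triangle_walks n E i = {}"
    by (auto simp: star_arcs_def triangle_walks_def neighbours_def adj_irrefl[OF G])
  have "card (star_arcs i) = card ({i} \<times> neighbours n E i) + card (neighbours n E i \<times> {i})"
    unfolding star_arcs_def using neighbours_not_refl by (intro card_Un_disjoint) auto
  then show "card (star_arcs i) = 2 * degree n E i"
    by (simp add: card_cartesian_product degree_eq_card_neighbours)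
qed

lemma card_triangle_walks_le_sum_degree:
  "card (triangle_walks n E i) + 2 * degree n E i \<le> (\<Sum>j<n. degree n E j)"
  using card_triangle_walks_add_disjoint_arcs[OF star_arcs(1,2)] star_arcs(3) by simp

context
  fixes u w assumes pendant: "neighbours n E u = {w}"
begin

lemma pendant_adj: "E u w" "E w u" "u \<noteq> w"
  using pendant neighbours_not_refl by (auto simp: neighbours_def adj_sym[OF G, of w])

lemma card_triangle_walks_pendant_neighbour:
  "card (triangle_walks n E w) \<le> (degree n E w - 1) * (degree n E w - 2)"
proof -
  let ?N = "neighbours n E"
  have u: "u \<in> ?N w"
    using pendant mem_neighbours_sym by blast
  have "card (?N j \<inter> ?N w) \<le> degree n E w - 2" if "j \<in> ?N w - {u}" for j
  proof -
    have "u \<notin> ?N j"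
    proof
      assume "u \<in> ?N j"
      then have "j = w"
        using pendant mem_neighbours_sym by blast
      then show False
        using that neighbours_not_refl by blast
    qed
    then have "?N j \<inter> ?N w \<subseteq> ?N w - {j, u}"
      using neighbours_not_refl by auto
    then have "card (?N j \<inter> ?N w) \<le> card (?N w - {j, u})"
      by (intro card_mono) auto
    also have "\<dots> = card (?N w) - 2"
      using that u by (simp add: card_Diff_subset)
    finally show ?thesis
      by (simp add: degree_eq_card_neighbours)
  qed
  then have "(\<Sum>j\<in>?N w - {u}. card (?N j \<inter> ?N w)) \<le> card (?N w - {u}) * (degree n E w - 2)"
    using sum_bounded_above[of "?N w - {u}" _ "degree n E w - 2"] by simp
  moreover have "card (triangle_walks n E w) = (\<Sum>j\<in>?N w - {u}. card (?N j \<inter> ?N w))"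
    using u pendant neighbours_not_refl by (simp add: card_triangle_walks[OF G] sum.remove)
  ultimately show ?thesis
    using u by (simp add: degree_eq_card_neighbours)
qed

lemma card_triangle_walks_pendant_far:
  assumes "i \<noteq> u" "i \<noteq> w"
  shows "card (triangle_walks n E i) + 2 * degree n E i + 2 \<le> (\<Sum>j<n. degree n E j)"
proof -
  let ?S = "star_arcs i \<union> {(u, w), (w, u)}"
  have "i \<notin> neighbours n E u"
    using pendant assms by simp
  then have "\<not> E u i" "\<not> E i u"
    using adj_less(2)[OF G, of u i] adj_sym[OF G, of i u] by (auto simp: neighbours_def)
  then have "{(u, w), (w, u)} \<inter> triangle_walks n E i = {}"
    by (auto simp: triangle_walks_def)
  moreover have "{(u, w), (w, u)} \<subseteq> arcs n E"
    using pendant_adj adj_less[OF G, of u w] by (simp add: arcs_def)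
  ultimately have "?S \<subseteq> arcs n E" "?S \<inter> triangle_walks n E i = {}"
    using star_arcs(1,2) by (simp_all add: Int_Un_distrib2)
  moreover have "card ?S = 2 * degree n E i + 2"
  proof -
    have "finite (star_arcs i)"
      using star_arcs(1) finite_arcs finite_subset by blast
    moreover have "star_arcs i \<inter> {(u, w), (w, u)} = {}"
      using assms by (auto simp: star_arcs_def)
    ultimately show ?thesis
      using star_arcs(3) pendant_adj(3) by (simp add: card_Un_disjoint)
  qed
  ultimately show ?thesis
    using card_triangle_walks_add_disjoint_arcs[of ?S i] by simp
qed

end

end

lemma real_card_triangle_walks_le:
  assumes G: "simple_graph n E"
  shows "real (card (triangle_walks n E i)) \<le> real (degree n E i) * (real (degree n E i) - 1)"
proof -
  have "real (card (triangle_walks n E i)) \<le> real (degree n E i * (degree n E i - 1))"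
    using card_triangle_walks_le[OF G] by (rule of_nat_mono)
  then show ?thesis
    by (cases "degree n E i") (simp_all add: algebra_simps)
qed

section \<open>Degree sequences with the moments of the friendship graph\<close>

context
  fixes k n :: nat and x :: "nat \<Rightarrow> nat"
  assumes n: "n = 2 * k + 1"
    and sum1: "(\<Sum>i<n. real (x i)) = 6 * real k"
    and sum2: "(\<Sum>i<n. real (x i) ^ 2) = 4 * real k ^ 2 + 8 * real k"
begin

lemma real_n: "real n = 2 * real k + 1"
  using n by simp

lemma sum_sq_minus_two: "(\<Sum>i<n. (real (x i) - 2) ^ 2) = (2 * real k - 2) ^ 2"
proof -
  have "(\<Sum>i<n. (real (x i) - 2) ^ 2) = (\<Sum>i<n. real (x i) ^ 2 - 4 * real (x i) + 4)"
    by (rule sum.cong) (simp_all add: power2_eq_square algebra_simps)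
  also have "\<dots> = (\<Sum>i<n. real (x i) ^ 2) - 4 * (\<Sum>i<n. real (x i)) + 4 * real n"
    by (simp add: sum.distrib sum_subtractf flip: sum_distrib_left)
  also have "\<dots> = (2 * real k - 2) ^ 2"
    unfolding sum1 sum2 real_n by (simp add: power2_eq_square algebra_simps)
  finally show ?thesis .
qed

lemma sum_sq_minus_two_weighted:
  "(\<Sum>i<n. (real (x i) - 2) ^ 2 * (2 * real k - real (x i)))
    = 8 * real k ^ 3 + 16 * real k - (\<Sum>i<n. real (x i) ^ 3)"
proof -
  have "(\<Sum>i<n. (real (x i) - 2) ^ 2 * (2 * real k - real (x i)))
      = (\<Sum>i<n. (2 * real k + 4) * real (x i) ^ 2 - real (x i) ^ 3 - (8 * real k + 4) * real (x i) + 8 * real k)"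
    by (rule sum.cong) (simp_all add: power2_eq_square power3_eq_cube algebra_simps)
  also have "\<dots> = (2 * real k + 4) * (\<Sum>i<n. real (x i) ^ 2) - (\<Sum>i<n. real (x i) ^ 3)
        - (8 * real k + 4) * (\<Sum>i<n. real (x i)) + 8 * real k * real n"
    by (simp add: sum.distrib sum_subtractf flip: sum_distrib_left)
  also have "\<dots> = 8 * real k ^ 3 + 16 * real k - (\<Sum>i<n. real (x i) ^ 3)"
    unfolding sum1 sum2 real_n by (simp add: power2_eq_square power3_eq_cube algebra_simps)
  finally show ?thesis .
qed

lemma others_eq_two_if_max:
  assumes c: "c < n" "x c = 2 * k"
  shows "\<forall>i<n. i \<noteq> c \<longrightarrow> x i = 2"
proof -
  have "(\<Sum>i<n. (real (x i) - 2) ^ 2) = (real (x c) - 2) ^ 2 + (\<Sum>i\<in>{..<n} - {c}. (real (x i) - 2) ^ 2)"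
    using c by (simp add: sum.remove)
  then have "(\<Sum>i\<in>{..<n} - {c}. (real (x i) - 2) ^ 2) = 0"
    using sum_sq_minus_two c by simp
  then show ?thesis
    by (subst (asm) sum_nonneg_eq_0_iff) auto
qed

lemma cube_sum_deficit_ge:
  assumes "\<forall>i<n. x i < 2 * k"
  shows "(2 * real k - 2) ^ 2 \<le> 8 * real k ^ 3 + 16 * real k - (\<Sum>i<n. real (x i) ^ 3)"
proof -
  have "(\<Sum>i<n. (real (x i) - 2) ^ 2) \<le> (\<Sum>i<n. (real (x i) - 2) ^ 2 * (2 * real k - real (x i)))"
  proof (rule sum_mono)
    fix i assume "i \<in> {..<n}"
    then have "real (x i + 1) \<le> real (2 * k)"
      using assms by (intro of_nat_mono) (simp add: Suc_le_eq)
    then have "1 \<le> 2 * real k - real (x i)"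
      by simp
    then show "(real (x i) - 2) ^ 2 \<le> (real (x i) - 2) ^ 2 * (2 * real k - real (x i))"
      by (simp add: mult_le_cancel_left1)
  qed
  then show ?thesis
    using sum_sq_minus_two sum_sq_minus_two_weighted by simp
qed

(* For x \<in> {0..3} the term (x - 2)(x - 3) is 6, 2, 0 or 0, and these terms sum to 2. *)
lemma exists_eq_one:
  assumes "k = 2" "\<forall>i<n. x i \<le> 3"
  obtains u where "u < n" "x u = 1"
proof -
  have "(\<Sum>i<n. (real (x i) - 2) * (real (x i) - 3)) = (\<Sum>i<n. real (x i) ^ 2 - 5 * real (x i) + 6)"
    by (rule sum.cong) (simp_all add: power2_eq_square algebra_simps)
  also have "\<dots> = (\<Sum>i<n. real (x i) ^ 2) - 5 * (\<Sum>i<n. real (x i)) + 6 * real n"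
    by (simp add: sum.distrib sum_subtractf flip: sum_distrib_left)
  also have "\<dots> = 2"
    unfolding sum1 sum2 real_n using assms(1) by simp
  finally have sum: "(\<Sum>i<n. (real (x i) - 2) * (real (x i) - 3)) = 2" .
  have nonneg: "0 \<le> (real (x i) - 2) * (real (x i) - 3)" for i
    by (cases "x i \<le> 2") (auto intro: mult_nonpos_nonpos)
  obtain u where u: "u < n" "(real (x u) - 2) * (real (x u) - 3) \<noteq> 0"
    using sum by (metis (no_types, lifting) lessThan_iff sum.neutral zero_neq_numeral)
  have "(real (x u) - 2) * (real (x u) - 3) \<le> 2"
    using member_le_sum[of u "{..<n}" "\<lambda>i. (real (x i) - 2) * (real (x i) - 3)"] u(1) nonneg sum by simp
  then have "x u = 1"
    using u assms(2) by (cases "x u") (auto simp: numeral_eq_Suc)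
  with u(1) show ?thesis ..
qed

end

(* (d - 2)\<^sup>2 (2k - d) + d = (2k + 4) d\<^sup>2 - d\<^sup>3 - (8k + 3) d + 8k, whose sum over the vertices
   is fixed by the first two moments; bounding triangle walks vertexwise by it bounds T in
   terms of the cube sum. *)
lemma triangle_bound_arith:
  fixes t :: real and k d :: nat
  assumes k: "k \<ge> 3" and d: "d < 2 * k"
    and t1: "t \<le> real d * (real d - 1)" and t2: "t + 2 * real d \<le> 6 * real k"
  shows "t \<le> (real d - 2) ^ 2 * (2 * real k - real d) + real d"
proof (cases "d = 2 * k - 1")
  case True
  then have d: "real d = 2 * real k - 1"
    using k by (simp add: of_nat_diff)
  have "3 \<le> 2 * real k - 3"
    using k by simp
  then have "3 * 3 \<le> (2 * real k - 3) ^ 2"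
    unfolding power2_eq_square by (intro mult_mono) auto
  moreover have "(real d - 2) ^ 2 * (2 * real k - real d) + real d = (2 * real k - 3) ^ 2 + 2 * real k - 1"
    using d by simp
  ultimately show ?thesis
    using t2 d by linarith
next
  case False
  then have d2: "real d + 2 \<le> 2 * real k"
    using d by linarith
  show ?thesis
  proof (cases "d = 3")
    case True
    then show ?thesis
      using t1 k by (simp add: power2_eq_square)
  next
    case False
    then have "0 \<le> (real d - 2) * (real d - 4)"
      by (cases "d \<le> 2") (auto intro: mult_nonpos_nonpos)
    moreover have "(real d - 2) ^ 2 * 2 \<le> (real d - 2) ^ 2 * (2 * real k - real d)"
      using d2 by (intro mult_left_mono) auto
    ultimately show ?thesis
      using t1 by (simp add: power2_eq_square algebra_simps)
  qed
qed

lemma sum_triangle_walks_bound: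
  assumes G: "simple_graph n E" and n: "n = 2 * k + 1" and k: "k \<ge> 2"
    and sum1: "(\<Sum>i<n. real (degree n E i)) = 6 * real k"
    and sum2: "(\<Sum>i<n. real (degree n E i) ^ 2) = 4 * real k ^ 2 + 8 * real k"
    and small: "\<forall>i<n. degree n E i < 2 * k"
  shows "(\<Sum>i<n. real (card (triangle_walks n E i)))
    \<le> (\<Sum>i<n. (real (degree n E i) - 2) ^ 2 * (2 * real k - real (degree n E i)) + real (degree n E i))"
proof (rule sum_mono)
  fix i assume i: "i \<in> {..<n}"
  let ?d = "degree n E" and ?t = "\<lambda>i. card (triangle_walks n E i)"
  have "real (\<Sum>i<n. ?d i) = real (6 * k)"
    using sum1 by simp
  then have sum_nat: "(\<Sum>i<n. ?d i) = 6 * k"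
    by (simp only: of_nat_eq_iff)
  then have t_far: "?t j + 2 * ?d j \<le> 6 * k" for j
    using card_triangle_walks_le_sum_degree[OF G, of j] by simp
  show "real (?t i) \<le> (real (?d i) - 2) ^ 2 * (2 * real k - real (?d i)) + real (?d i)"
  proof (cases "k \<ge> 3")
    case True
    have "real (?t i + 2 * ?d i) \<le> real (6 * k)"
      using t_far by (rule of_nat_mono)
    then show ?thesis
      using small i True real_card_triangle_walks_le[OF G] by (intro triangle_bound_arith) auto
  next
    case False
    \<comment> \<open>The vertexwise bound fails at degree 3 when \<open>k = 2\<close>; a pendant vertex supplies the slack.\<close>
    with k have k2: "k = 2" by simp
    have le3: "?d j \<le> 3" if "j < n" for j
      using small that k2 by fastforce
    obtain u where u: "u < n" "?d u = 1"
      using exists_eq_one[OF n sum1 sum2 k2] le3 by blast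
    then obtain w where w: "neighbours n E u = {w}"
      by (auto simp: degree_eq_card_neighbours card_Suc_eq)
    have t_le: "?t i \<le> ?d i * (?d i - 1)"
      by (rule card_triangle_walks_le[OF G])
    have t4: "?t i \<le> 4"
    proof -
      consider "i = u" | "i = w" | "i \<noteq> u" "i \<noteq> w" by blast
      then show ?thesis
      proof cases
        case 1
        then show ?thesis using t_le u by simp
      next
        case 2
        have "(?d w - 1) * (?d w - 2) \<le> 2 * 1"
          using le3[of w] i 2 by (intro mult_le_mono) auto
        then show ?thesis
          using card_triangle_walks_pendant_neighbour[OF G w] 2 by simp
      next
        case 3
        then have "?t i + 2 * ?d i + 2 \<le> 12"
          using card_triangle_walks_pendant_far[OF G w 3] sum_nat k2 by simp
        moreover have "?d i \<le> 2 \<Longrightarrow> ?d i * (?d i - 1) \<le> 2 * 1"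
          by (intro mult_le_mono) auto
        ultimately show ?thesis
          using t_le by linarith
      qed
    qed
    have "?d i = 0 \<or> ?d i = 1 \<or> ?d i = 2 \<or> ?d i = 3"
      using le3[of i] i by auto
    then show ?thesis
      using t_le t4 k2 by (elim disjE) (simp_all add: power2_eq_square)
  qed
qed

lemma dominating_vertex_of_moments:
  assumes G: "simple_graph n E" and n: "n = 2 * k + 1" and k: "k \<ge> 1"
    and \<alpha>: "1/2 < \<alpha>" "\<alpha> < 1"
    and sum1: "(\<Sum>i<n. real (degree n E i)) = 6 * real k"
    and sum2: "(\<Sum>i<n. real (degree n E i) ^ 2) = 4 * real k ^ 2 + 8 * real k"
    and sum3: "\<alpha>^3 * (\<Sum>i<n. real (degree n E i) ^ 3) + (1 - \<alpha>)^3 * (\<Sum>i<n. real (card (triangle_walks n E i)))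
      = \<alpha>^3 * (8 * real k ^ 3 + 16 * real k) + (1 - \<alpha>)^3 * (6 * real k)"
  obtains c where "c < n" "degree n E c = 2 * k" "\<forall>i<n. i \<noteq> c \<longrightarrow> degree n E i = 2"
proof (cases "\<exists>c<n. degree n E c = 2 * k")
  case True
  then show ?thesis
    using that others_eq_two_if_max[OF n sum1 sum2] by blast
next
  case False
  have small: "\<forall>i<n. degree n E i < 2 * k"
  proof (intro allI impI)
    fix i assume "i < n"
    then have "degree n E i \<le> 2 * k" "degree n E i \<noteq> 2 * k"
      using degree_le[OF G, of i] n False by auto
    then show "degree n E i < 2 * k"
      by simp
  qed
  show ?thesis
  proof (cases "k = 1")
    case True
    have "degree n E i \<le> 1" if "i < n" for i
      using small[rule_format, OF that] True by linarith
    then have "real (degree n E i) \<le> 1" if "i < n" for i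
      using that by simp
    then have "(\<Sum>i<n. real (degree n E i)) \<le> (\<Sum>i<n. 1)"
      by (intro sum_mono) simp
    then show ?thesis
      using sum1 True n by simp
  next
    case False
    define D where "D = 8 * real k ^ 3 + 16 * real k - (\<Sum>i<n. real (degree n E i) ^ 3)"
    have "0 < (2 * real k - 2) ^ 2"
      using False k by simp
    then have D: "0 < D"
      using cube_sum_deficit_ge[OF n sum1 sum2 small] unfolding D_def by linarith
    let ?T = "\<Sum>i<n. real (card (triangle_walks n E i))"
    have "?T \<le> (\<Sum>i<n. (real (degree n E i) - 2) ^ 2 * (2 * real k - real (degree n E i)))
        + (\<Sum>i<n. real (degree n E i))"
      using sum_triangle_walks_bound[OF G n _ sum1 sum2 small] False k by (simp add: sum.distrib)
    then have "?T - 6 * real k \<le> D"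
      unfolding sum_sq_minus_two_weighted[OF n sum1 sum2] sum1 D_def by simp
    then have "(1 - \<alpha>)^3 * (?T - 6 * real k) \<le> (1 - \<alpha>)^3 * D"
      using \<alpha> by (intro mult_left_mono) auto
    moreover have "(1 - \<alpha>)^3 * (?T - 6 * real k) = \<alpha>^3 * D"
      unfolding D_def right_diff_distrib using sum3 by linarith
    ultimately have "\<alpha>^3 * D \<le> (1 - \<alpha>)^3 * D"
      by simp
    moreover have "(1 - \<alpha>)^3 < \<alpha>^3"
      using \<alpha> by (intro power_strict_mono) auto
    ultimately show ?thesis
      using D by (simp add: mult_le_cancel_right)
  qed
qed

section \<open>The friendship graph\<close>

definition fpf_involution_on :: "'a set \<Rightarrow> ('a \<Rightarrow> 'a) \<Rightarrow> bool" where
  "fpf_involution_on X p \<longleftrightarrow> (\<forall>x\<in>X. p x \<in> X \<and> p x \<noteq> x \<and> p (p x) = x)"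

lemma fpf_involution_on_Diff_pair:
  assumes p: "fpf_involution_on X p" and x: "x \<in> X"
  shows "fpf_involution_on (X - {x, p x}) p"
  unfolding fpf_involution_on_def
proof
  fix z assume z: "z \<in> X - {x, p x}"
  have "p z \<noteq> x" "p z \<noteq> p x"
    using p x z unfolding fpf_involution_on_def by (metis Diff_iff insertCI)+
  then show "p z \<in> X - {x, p x} \<and> p z \<noteq> z \<and> p (p z) = z"
    using p z unfolding fpf_involution_on_def by auto
qed

lemma fpf_involutions_conjugate:
  assumes "finite X" "finite Y" "card X = card Y" "fpf_involution_on X p" "fpf_involution_on Y q"
  shows "\<exists>g. bij_betw g X Y \<and> (\<forall>x\<in>X. g (p x) = q (g x))"
  using assms
proof (induction "card X" arbitrary: X Y rule: less_induct)
  case less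
  show ?case
  proof (cases "X = {}")
    case True
    then show ?thesis
      using less.prems(2,3) by (simp add: bij_betw_def)
  next
    case False
    then obtain x where x: "x \<in> X" by blast
    have "Y \<noteq> {}"
      using False less.prems(1-3) by auto
    then obtain y where y: "y \<in> Y" by blast
    have px: "p x \<in> X" "p x \<noteq> x" "p (p x) = x"
      using less.prems(4) x unfolding fpf_involution_on_def by blast+
    have qy: "q y \<in> Y" "q y \<noteq> y" "q (q y) = y"
      using less.prems(5) y unfolding fpf_involution_on_def by blast+
    let ?X = "X - {x, p x}" and ?Y = "Y - {y, q y}"
    have card: "card ?X = card X - 2" "card ?Y = card Y - 2"
      using px qy x y less.prems(1,2) by (simp_all add: card_Diff_subset)
    moreover have "card X > 0"
      using x less.prems(1) card_gt_0_iff by blast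
    ultimately have "card ?X < card X"
      by simp
    moreover have "card ?X = card ?Y"
      using card less.prems(3) by simp
    ultimately obtain g where g: "bij_betw g ?X ?Y" "\<forall>z\<in>?X. g (p z) = q (g z)"
      using less.hyps[of ?X ?Y] less.prems(1,2) fpf_involution_on_Diff_pair[OF less.prems(4) x]
        fpf_involution_on_Diff_pair[OF less.prems(5) y]
      by blast
    define h where "h z = (if z = x then y else if z = p x then q y else g z)" for z
    have "bij_betw h ?X ?Y"
      using g(1) by (rule bij_betw_cong[THEN iffD1, rotated]) (simp add: h_def)
    moreover have "bij_betw h {x, p x} {y, q y}"
      using px qy by (auto simp: bij_betw_def h_def inj_on_def)
    ultimately have "bij_betw h (?X \<union> {x, p x}) (?Y \<union> {y, q y})"
      by (rule bij_betw_combine) blast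
    moreover have "?X \<union> {x, p x} = X" "?Y \<union> {y, q y} = Y"
      using x px y qy by auto
    ultimately have "bij_betw h X Y"
      by simp
    moreover have "h (p z) = q (h z)" if "z \<in> X" for z
    proof (cases "z = x \<or> z = p x")
      case True
      then show ?thesis using px qy by (auto simp: h_def)
    next
      case False
      then have "z \<in> ?X" "p z \<in> ?X"
        using that fpf_involution_on_Diff_pair[OF less.prems(4) x]
        unfolding fpf_involution_on_def by blast+
      then show ?thesis
        using g(2) by (auto simp: h_def)
    qed
    ultimately show ?thesis
      by blast
  qed
qed

definition partner :: "nat \<Rightarrow> nat" where
  "partner i = (if odd i then i + 1 else i - 1)"

lemma friendship_iff:
  "friendship k i j \<longleftrightarrow> i < 2 * k + 1 \<and> j < 2 * k + 1 \<and> i \<noteq> j \<and> (i = 0 \<or> j = 0 \<or> j = partner i)"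
proof -
  have "i \<noteq> 0 \<Longrightarrow> j \<noteq> 0 \<Longrightarrow> (i \<noteq> j \<and> (i - 1) div 2 = (j - 1) div 2) \<longleftrightarrow> j = partner i"
    unfolding partner_def by presburger
  then show ?thesis
    unfolding friendship_def by auto
qed

lemma partner_range:
  assumes "i \<in> {1..2 * k}"
  shows "partner i \<in> {1..2 * k}" "partner i \<noteq> i" "partner (partner i) = i"
  using assms unfolding partner_def atLeastAtMost_iff by presburger+

lemma friendship_partner:
  assumes "i \<in> {1..2 * k}" "j \<in> {1..2 * k}"
  shows "friendship k i j \<longleftrightarrow> j = partner i"
  using assms partner_range(2)[OF assms(1)] unfolding friendship_iff by auto

lemma fpf_involution_on_partner: "fpf_involution_on {1..2 * k} partner"
  unfolding fpf_involution_on_def using partner_range by blast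

lemma sum_if_zero: "(\<Sum>i<Suc m. if i = 0 then a else b) = a + of_nat m * (b :: 'a::comm_semiring_1)"
  by (induction m) (simp_all add: algebra_simps)

context
  fixes k n :: nat assumes n: "n = 2 * k + 1"
begin

lemma simple_graph_friendship: "simple_graph n (friendship k)"
  using n unfolding simple_graph_def friendship_def by auto

lemma neighbours_friendship_centre: "neighbours n (friendship k) 0 = {1..2 * k}"
  using n by (auto simp: neighbours_def friendship_iff)

lemma neighbours_friendship:
  assumes "i \<in> {1..2 * k}"
  shows "neighbours n (friendship k) i = {0, partner i}"
  using assms partner_range[OF assms] n by (auto simp: neighbours_def friendship_iff)

lemma degree_friendship:
  assumes "i < n"
  shows "degree n (friendship k) i = (if i = 0 then 2 * k else 2)"
proof (cases "i = 0")
  case False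
  then have i: "i \<in> {1..2 * k}"
    using assms n by simp
  then show ?thesis
    using False partner_range[OF i] by (simp add: degree_eq_card_neighbours neighbours_friendship)
qed (simp add: degree_eq_card_neighbours neighbours_friendship_centre)

lemma card_triangle_walks_friendship:
  assumes "i < n"
  shows "card (triangle_walks n (friendship k) i) = (if i = 0 then 2 * k else 2)"
proof -
  let ?N = "neighbours n (friendship k)"
  note tw = card_triangle_walks[OF simple_graph_friendship]
  show ?thesis
  proof (cases "i = 0")
    case True
    have "?N j \<inter> ?N 0 = {partner j}" if "j \<in> {1..2 * k}" for j
      using that partner_range[OF that] by (auto simp: neighbours_friendship neighbours_friendship_centre)
    then show ?thesis
      using True by (simp add: tw neighbours_friendship_centre)
  next
    case False
    then have i: "i \<in> {1..2 * k}"
      using assms n by simp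
    have "?N 0 \<inter> ?N i = {partner i}" "?N (partner i) \<inter> ?N i = {0}"
      using i partner_range[OF i] by (auto simp: neighbours_friendship neighbours_friendship_centre)
    then show ?thesis
      using False i partner_range[OF i] by (simp add: tw neighbours_friendship)
  qed
qed

lemma friendship_degree_power_sum:
  "(\<Sum>i<n. real (degree n (friendship k) i) ^ p) = (2 * real k) ^ p + 2 * real k * 2 ^ p"
proof -
  have "(\<Sum>i<n. real (degree n (friendship k) i) ^ p) = (\<Sum>i<n. if i = 0 then (2 * real k) ^ p else 2 ^ p)"
    by (intro sum.cong) (auto simp: degree_friendship)
  also have "\<dots> = (2 * real k) ^ p + 2 * real k * 2 ^ p"
    unfolding n Suc_eq_plus1[symmetric] sum_if_zero by simp
  finally show ?thesis .
qed

lemma friendship_triangle_walks_sum: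
  "(\<Sum>i<n. real (card (triangle_walks n (friendship k) i))) = 6 * real k"
proof -
  have "(\<Sum>i<n. real (card (triangle_walks n (friendship k) i))) = (\<Sum>i<n. if i = 0 then 2 * real k else 2)"
    by (intro sum.cong) (auto simp: card_triangle_walks_friendship)
  also have "\<dots> = 6 * real k"
    unfolding n Suc_eq_plus1[symmetric] sum_if_zero by simp
  finally show ?thesis .
qed

end

lemma graph_iso_friendship:
  assumes G: "simple_graph n E" and n: "n = 2 * k + 1" and c: "c < n"
    and deg_c: "degree n E c = 2 * k" and deg: "\<forall>i<n. i \<noteq> c \<longrightarrow> degree n E i = 2"
  shows "graph_iso n E (2 * k + 1) (friendship k)"
proof -
  let ?N = "neighbours n E" and ?X = "{..<n} - {c}"
  have adj_iff: "E i j \<longleftrightarrow> j \<in> ?N i" for i j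
    using adj_less[OF G] by (auto simp: neighbours_def)
  have "?N c = ?X"
    using c deg_c n neighbours_not_refl[OF G]
    by (intro card_subset_eq) (auto simp: degree_eq_card_neighbours neighbours_def)
  then have adj_c: "E c v" "E v c" if "v \<in> ?X" for v
    using that adj_iff adj_sym[OF G, of c v] by auto
  have "\<exists>w. w \<noteq> c \<and> ?N v = {c, w}" if v: "v \<in> ?X" for v
  proof -
    have "c \<in> ?N v" "card (?N v) = 2"
      using v adj_c adj_iff deg by (auto simp: degree_eq_card_neighbours)
    then have "card (?N v - {c}) = 1"
      by simp
    then obtain w where "?N v - {c} = {w}"
      by (auto simp: card_Suc_eq)
    with \<open>c \<in> ?N v\<close> show ?thesis
      by blast
  qed
  then obtain p where p: "\<And>v. v \<in> ?X \<Longrightarrow> p v \<noteq> c \<and> ?N v = {c, p v}"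
    by metis
  then have adj_X: "E v j \<longleftrightarrow> j = c \<or> j = p v" if "v \<in> ?X" for v j
    using that adj_iff by blast
  have "fpf_involution_on ?X p"
    unfolding fpf_involution_on_def
  proof
    fix v assume v: "v \<in> ?X"
    then have vp: "E v (p v)" "E (p v) v" "p v \<noteq> c"
      using adj_X[OF v] adj_sym[OF G] p by blast+
    then have "p v \<in> ?X" "p v \<noteq> v"
      using adj_less(2)[OF G, of v "p v"] adj_irrefl[OF G, of v] by auto
    moreover have "p (p v) = v"
      using adj_X[OF \<open>p v \<in> ?X\<close>, of v] vp(2) v by simp
    ultimately show "p v \<in> ?X \<and> p v \<noteq> v \<and> p (p v) = v"
      by blast
  qed
  moreover have "card ?X = card {1..2 * k}"
    using c n by simp
  ultimately obtain g where g: "bij_betw g ?X {1..2 * k}" "\<forall>v\<in>?X. g (p v) = partner (g v)"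
    using fpf_involutions_conjugate[OF _ _ _ _ fpf_involution_on_partner] by blast
  define f where "f v = (if v = c then 0 else g v)" for v
  have "bij_betw f ?X {1..2 * k}"
    using g(1) by (rule bij_betw_cong[THEN iffD1, rotated]) (simp add: f_def)
  then have "bij_betw f (?X \<union> {c}) ({1..2 * k} \<union> {0})"
    by (rule bij_betw_combine) (auto simp: f_def bij_betw_def)
  moreover have "?X \<union> {c} = {0..<n}" "{1..2 * k} \<union> {0} = {0..<2 * k + 1}"
    using c by auto
  ultimately have bij: "bij_betw f {0..<n} {0..<2 * k + 1}"
    by simp
  have gX: "g v \<in> {1..2 * k}" if "v \<in> ?X" for v
    using g(1) that by (auto simp: bij_betw_def)
  have adj_f: "E i j \<longleftrightarrow> friendship k (f i) (f j)" if ij: "i < n" "j < n" for i j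
  proof (cases "i = c \<or> j = c")
    case True
    then consider "i = c" "j = c" | "i = c" "j \<in> ?X" | "i \<in> ?X" "j = c"
      using ij by blast
    then show ?thesis
    proof cases
      case 1
      then show ?thesis
        using adj_irrefl[OF G] by (simp add: friendship_def)
    next
      case 2
      then show ?thesis
        using adj_c(1) gX[of j] by (simp add: f_def friendship_def)
    next
      case 3
      then show ?thesis
        using adj_c(2) gX[of i] by (simp add: f_def friendship_def)
    qed
  next
    case False
    then have X: "i \<in> ?X" "j \<in> ?X" "p i \<in> ?X"
      using ij \<open>fpf_involution_on ?X p\<close> unfolding fpf_involution_on_def by blast+
    have "E i j \<longleftrightarrow> j = p i"
      using adj_X[OF X(1), of j] False by simp
    also have "\<dots> \<longleftrightarrow> g j = g (p i)"
      using inj_on_eq_iff[OF bij_betw_imp_inj_on[OF g(1)] X(2,3)] by simp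
    also have "\<dots> \<longleftrightarrow> g j = partner (g i)"
      using g(2) X(1) by simp
    also have "\<dots> \<longleftrightarrow> friendship k (g i) (g j)"
      using friendship_partner[OF gX[OF X(1)] gX[OF X(2)]] by simp
    finally show ?thesis
      using False by (simp add: f_def)
  qed
  show ?thesis
    unfolding graph_iso_def using bij adj_f by (intro exI[of _ f]) simp
qed

theorem corollary3p10:
  fixes k :: nat and \<alpha> :: real
  assumes "k \<ge> 1" and "1/2 < \<alpha>" and "\<alpha> < 1"
  shows "determined_by_A_alpha_spectrum \<alpha> (2*k+1) (friendship k)"
  unfolding determined_by_A_alpha_spectrum_def
proof (intro allI impI, elim conjE)
  fix m F
  assume G: "simple_graph m F"
    and sp: "A_alpha_spectrum \<alpha> m F = A_alpha_spectrum \<alpha> (2*k+1) (friendship k)"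
  have "\<alpha> \<noteq> 0"
    using assms by simp
  note moments = A_alpha_cospectral_degree_moments[OF G simple_graph_friendship[OF refl] this sp]
  have fr1: "(\<Sum>i<2*k+1. real (degree (2*k+1) (friendship k) i)) = 6 * real k"
    using friendship_degree_power_sum[OF refl, of k 1] by simp
  have fr2: "(\<Sum>i<2*k+1. real (degree (2*k+1) (friendship k) i) ^ 2) = 4 * real k ^ 2 + 8 * real k"
    using friendship_degree_power_sum[OF refl, of k 2] by (simp add: power_mult_distrib)
  have fr3: "(\<Sum>i<2*k+1. real (degree (2*k+1) (friendship k) i) ^ 3) = 8 * real k ^ 3 + 16 * real k"
    using friendship_degree_power_sum[OF refl, of k 3] by (simp add: power_mult_distrib)
  note friendship_moments = fr1 fr2 fr3 friendship_triangle_walks_sum[OF refl, of k]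
  obtain c where "c < m" "degree m F c = 2 * k" "\<forall>i<m. i \<noteq> c \<longrightarrow> degree m F i = 2"
    using dominating_vertex_of_moments[OF G moments(1) assms moments(2-4)[unfolded friendship_moments]]
    by blast
  then show "graph_iso m F (2*k+1) (friendship k)"
    using graph_iso_friendship[OF G moments(1)] by blast
qed

end
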